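(* For any discrete set $S\subset \mathbb{R}^2$ with finite Helly number $\mathrm{He}(S) \geq 4$, we have $\mathrm{Tv}(S,m) \leq \mathrm{He}(S)(m-1) + 1$ whenever $m \geq 3$. For the case $m = 2$, we have $\mathrm{Tv}(S,2) \leq \mathrm{He}(S) + 2$.
   Context: For $S\subseteq\mathbb{R}^d$ and an integer $m\geq 2$, the Tverberg number $\mathrm{Tv}(S,m)$ is the smallest positive integer $n$ such that any multiset of $n$ points in $S$ admits a partition into $m$ submultisets $A_1,\dots,A_m$ with $\left(\bigcap_{i=1}^m\mathrm{conv}(A_i)\right)\cap S\neq\varnothing$ (and $\mathrm{Tv}(S,m)=\infty$ if no such number exists). The Helly number $\mathrm{He}(S)$ is the smallest positive integer $h$ such that whenever $\mathcal{F}$ is a finite family of convex sets such that every subfamily of at most $h$ members has intersection meeting $S$, then $\bigcap\mathcal{F}$ meets $S$. *)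

theory Defs
  imports "HOL-Analysis.Analysis" "HOL-Library.Multiset" "HOL-Library.Extended_Nat"
begin

definition discrete_set :: "(real^2) set \<Rightarrow> bool" where
  "discrete_set S \<longleftrightarrow> (\<forall>x. \<not> x islimpt S)"

definition tverberg_prop :: "(real^2) set \<Rightarrow> nat \<Rightarrow> nat \<Rightarrow> bool" where
  "tverberg_prop S m n \<longleftrightarrow>
     (\<forall>M :: (real^2) multiset. set_mset M \<subseteq> S \<and> size M = n \<longrightarrow>
        (\<exists>A :: nat \<Rightarrow> (real^2) multiset. (\<Sum>i<m. A i) = M \<and>
             (\<Inter>i<m. convex hull (set_mset (A i))) \<inter> S \<noteq> {}))"

definition tverberg_number :: "(real^2) set \<Rightarrow> nat \<Rightarrow> enat" where
  "tverberg_number S m =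
     (if \<exists>n>0. tverberg_prop S m n
      then enat (LEAST n. n > 0 \<and> tverberg_prop S m n) else \<infinity>)"

definition helly_prop :: "(real^2) set \<Rightarrow> nat \<Rightarrow> bool" where
  "helly_prop S h \<longleftrightarrow>
     (\<forall>F :: (real^2) set set. finite F \<and> (\<forall>C\<in>F. convex C) \<longrightarrow>
        (\<forall>G\<subseteq>F. card G \<le> h \<longrightarrow> \<Inter>G \<inter> S \<noteq> {}) \<longrightarrow> \<Inter>F \<inter> S \<noteq> {})"

definition helly_number :: "(real^2) set \<Rightarrow> enat" where
  "helly_number S =
     (if \<exists>h>0. helly_prop S h then enat (LEAST h. h > 0 \<and> helly_prop S h) else \<infinity>)"

end

theory Submission
  imports Defs
begin

(* A point set with Helly number h gives every multiset M of more than h(m - 1) of its points a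
   centerpoint p in S: p lies in the convex hull of what remains after deleting any m - 1
   points, so every closed half-plane through p contains at least m points of M. In the plane,
   Birch's theorem splits at least 3m points around which p has this depth m into m parts whose
   convex hulls all contain p: sort the points by angle, remove a triple spread around the
   circle that captures p, and observe that every half-plane loses at most one point. For h >= 4,
   h(m - 1) + 1 >= 3m when m >= 3, and h + 2 >= 6 when m = 2. *)

section \<open>Polar angles and half circles\<close>

lemma inner_vec2: "inner (u::real^2) z = u$1 * z$1 + u$2 * z$2"
  by (simp add: inner_vec_def sum_2)

lemma norm_vec2: "norm (z::real^2) = sqrt ((z$1)^2 + (z$2)^2)"
  by (simp add: norm_vec_def L2_set_def sum_2)

definition polar_angle :: "real^2 \<Rightarrow> real" where
  "polar_angle z = (SOME t. 0 \<le> t \<and> t < 2*pi \<and> z = norm z *\<^sub>R vector [cos t, sin t])"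

lemma polar_angle_exists:
  fixes z :: "real^2"
  shows "\<exists>t. 0 \<le> t \<and> t < 2*pi \<and> z = norm z *\<^sub>R vector [cos t, sin t]"
proof (cases "z = 0")
  case True
  then show ?thesis by (intro exI[of _ 0]) simp
next
  case False
  then have "norm z > 0" by simp
  then have "(norm z)^2 \<noteq> 0" by simp
  have "(z$1)^2 + (z$2)^2 = (norm z)^2"
    by (simp add: norm_vec2)
  then have "(z$1 / norm z)^2 + (z$2 / norm z)^2 = (norm z)^2 / (norm z)^2"
    by (simp only: power_divide add_divide_distrib[symmetric])
  also have "\<dots> = 1"
    using \<open>(norm z)^2 \<noteq> 0\<close> by (rule divide_self)
  finally have "(z$1 / norm z)^2 + (z$2 / norm z)^2 = 1" .
  then obtain t where t: "0 \<le> t" "t < 2*pi" "z$1 / norm z = cos t" "z$2 / norm z = sin t"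
    by (rule sincos_total_2pi)
  have "z = norm z *\<^sub>R vector [cos t, sin t]"
    unfolding vec_eq_iff forall_2 using t(3,4) \<open>norm z > 0\<close> by (simp add: field_simps)
  then show ?thesis using t by blast
qed

lemma polar_angle_bounds: "0 \<le> polar_angle z" "polar_angle z < 2*pi"
  and polar_decomposition: "z = norm z *\<^sub>R vector [cos (polar_angle z), sin (polar_angle z)]"
  using someI_ex[OF polar_angle_exists[of z]] unfolding polar_angle_def by blast+

lemma inner_unit_vector_polar:
  "inner (vector [cos a, sin a] :: real^2) z = norm z * cos (polar_angle z - a)"
proof -
  have "inner (vector [cos a, sin a] :: real^2) z
      = inner (vector [cos a, sin a] :: real^2)
          (norm z *\<^sub>R vector [cos (polar_angle z), sin (polar_angle z)])"
    using polar_decomposition[of z] by simp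
  then show ?thesis by (simp add: inner_vec2 cos_diff algebra_simps)
qed

lemma inner_polar: "inner u z = norm u * norm z * cos (polar_angle z - polar_angle u)"
proof -
  have "inner u z = inner (norm u *\<^sub>R vector [cos (polar_angle u), sin (polar_angle u)]) z"
    using polar_decomposition[of u] by simp
  then show ?thesis by (simp add: inner_unit_vector_polar)
qed

lemma shift_into_period:
  fixes a t :: real
  obtains k :: int where "a \<le> t + 2*pi*k" "t + 2*pi*k < a + 2*pi"
proof
  define k where "k = - \<lfloor>(t - a) / (2*pi)\<rfloor>"
  have "- of_int k * (2*pi) \<le> t - a" "t - a < (- of_int k + 1) * (2*pi)"
    unfolding k_def using floor_divide_lower[of "2*pi" "t - a"] floor_divide_upper[of "2*pi" "t - a"]
    by simp_all
  then show "a \<le> t + 2*pi*k" "t + 2*pi*k < a + 2*pi"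
    by (simp_all add: algebra_simps)
qed

lemma cos_add_2pi_int: "cos ((t::real) + 2*pi * of_int k) = cos t"
  by (simp add: cos_add mult.assoc[symmetric])

definition in_half_circle :: "real \<Rightarrow> real \<Rightarrow> bool" where
  "in_half_circle \<alpha> t \<longleftrightarrow> (\<exists>k::int. \<alpha> \<le> t + 2*pi*k \<and> t + 2*pi*k \<le> \<alpha> + pi)"

lemma cos_nonneg_iff_in_half_circle: "0 \<le> cos t \<longleftrightarrow> in_half_circle (-(pi/2)) t"
proof
  assume "in_half_circle (-(pi/2)) t"
  then obtain k :: int where "-(pi/2) \<le> t + 2*pi*k" "t + 2*pi*k \<le> pi/2"
    unfolding in_half_circle_def by auto
  then have "0 \<le> cos (t + 2*pi*k)" by (rule cos_ge_zero)
  then show "0 \<le> cos t" by (simp only: cos_add_2pi_int)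
next
  assume "0 \<le> cos t"
  obtain k :: int where k: "-pi \<le> t + 2*pi*k" "t + 2*pi*k < -pi + 2*pi"
    by (rule shift_into_period)
  define s where "s = t + 2*pi*k"
  have "0 \<le> cos s" "0 \<le> cos (-s)"
    unfolding s_def using \<open>0 \<le> cos t\<close> by (simp_all only: cos_add_2pi_int cos_minus)
  moreover have "-pi \<le> s" "s < pi"
    using k unfolding s_def by simp_all
  ultimately have "-(pi/2) \<le> s" "s \<le> pi/2"
    using cos_lt_zero_pi[of "-s"] cos_lt_zero_pi[of s] by (fastforce simp: not_le[symmetric])+
  then show "in_half_circle (-(pi/2)) t" unfolding s_def in_half_circle_def by auto
qed

lemma cos_diff_nonneg_iff_in_half_circle:
  "0 \<le> cos (t - (\<alpha> + pi/2)) \<longleftrightarrow> in_half_circle \<alpha> t"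
  unfolding cos_nonneg_iff_in_half_circle in_half_circle_def by (intro ex_cong1) linarith

lemma inner_nonneg_iff_in_half_circle:
  assumes "u \<noteq> 0" "z \<noteq> 0"
  shows "0 \<le> inner u z \<longleftrightarrow> in_half_circle (polar_angle u - pi/2) (polar_angle z)"
proof -
  have "0 < norm u * norm z" using assms by simp
  then show ?thesis
    using cos_diff_nonneg_iff_in_half_circle[of "polar_angle z" "polar_angle u - pi/2"]
    by (simp add: inner_polar zero_le_mult_iff)
qed

lemma inner_unit_nonneg_iff_in_half_circle:
  assumes "z \<noteq> 0"
  shows "0 \<le> inner (vector [cos (\<alpha> + pi/2), sin (\<alpha> + pi/2)] :: real^2) z
    \<longleftrightarrow> in_half_circle \<alpha> (polar_angle z)"
  using cos_diff_nonneg_iff_in_half_circle[of "polar_angle z" \<alpha>] assms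
  by (simp add: inner_unit_vector_polar zero_le_mult_iff)

section \<open>Angles of points sorted around the origin\<close>

text \<open>\<open>\<Theta>\<close> lists the polar angles of \<open>n\<close> points in increasing order, extended to all
  integers by periodicity; every closed half circle contains at least \<open>d\<close> of them.\<close>
locale angular_sequence =
  fixes \<Theta> :: "int \<Rightarrow> real" and n d :: nat
  assumes \<Theta>_mono: "\<And>i j. i \<le> j \<Longrightarrow> \<Theta> i \<le> \<Theta> j"
    and \<Theta>_periodic: "\<And>i. \<Theta> (i + int n) = \<Theta> i + 2*pi"
    and depth_pos: "1 \<le> d"
    and half_circle_card: "\<And>\<alpha>. d \<le> card {i. \<alpha> \<le> \<Theta> i \<and> \<Theta> i \<le> \<alpha> + pi}"
begin

lemma \<Theta>_gap_le_pi:
  assumes "x \<le> y" "y - x \<le> int d"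
  shows "\<Theta> y - \<Theta> x \<le> pi"
proof (rule ccontr)
  assume gap: "\<not> \<Theta> y - \<Theta> x \<le> pi"
  define \<alpha> where "\<alpha> = (\<Theta> x + \<Theta> y - pi) / 2"
  have "{i. \<alpha> \<le> \<Theta> i \<and> \<Theta> i \<le> \<alpha> + pi} \<subseteq> {x<..<y}"
  proof
    fix i assume i: "i \<in> {i. \<alpha> \<le> \<Theta> i \<and> \<Theta> i \<le> \<alpha> + pi}"
    have "\<not> i \<le> x" using \<Theta>_mono[of i x] i gap unfolding \<alpha>_def by auto
    moreover have "\<not> y \<le> i" using \<Theta>_mono[of y i] i gap unfolding \<alpha>_def by (auto simp: field_simps)
    ultimately show "i \<in> {x<..<y}" by simp
  qed
  then have "card {i. \<alpha> \<le> \<Theta> i \<and> \<Theta> i \<le> \<alpha> + pi} \<le> card {x<..<y}"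
    by (intro card_mono) simp_all
  then have "int d \<le> y - x - 1"
    using half_circle_card[of \<alpha>] depth_pos by simp
  then show False using assms by linarith
qed

definition reach :: "int \<Rightarrow> int" where
  "reach x = Max {y. x \<le> y \<and> \<Theta> y \<le> \<Theta> x + pi}"

lemma reach:
  shows "x \<le> reach x" "\<Theta> (reach x) \<le> \<Theta> x + pi"
    and reach_maximal: "\<And>y. x \<le> y \<Longrightarrow> \<Theta> y \<le> \<Theta> x + pi \<Longrightarrow> y \<le> reach x"
proof -
  have "{y. x \<le> y \<and> \<Theta> y \<le> \<Theta> x + pi} \<subseteq> {x..x + int n}"
  proof
    fix y assume y: "y \<in> {y. x \<le> y \<and> \<Theta> y \<le> \<Theta> x + pi}"
    then have "\<not> x + int n < y"
      using \<Theta>_mono[of "x + int n" y] \<Theta>_periodic[of x] pi_gt_zero by auto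
    then show "y \<in> {x..x + int n}" using y by simp
  qed
  then have fin: "finite {y. x \<le> y \<and> \<Theta> y \<le> \<Theta> x + pi}"
    by (rule finite_subset) simp
  have "x \<in> {y. x \<le> y \<and> \<Theta> y \<le> \<Theta> x + pi}" using pi_gt_zero by simp
  then have "reach x \<in> {y. x \<le> y \<and> \<Theta> y \<le> \<Theta> x + pi}"
    unfolding reach_def using Max_in[OF fin] by blast
  then show "x \<le> reach x" "\<Theta> (reach x) \<le> \<Theta> x + pi" by auto
  show "\<And>y. x \<le> y \<Longrightarrow> \<Theta> y \<le> \<Theta> x + pi \<Longrightarrow> y \<le> reach x"
    unfolding reach_def using Max_ge[OF fin] by blast
qed

lemma reach_ge: "x + int d \<le> reach x"
  using reach_maximal[of x "x + int d"] \<Theta>_gap_le_pi[of x "x + int d"] by simp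

lemma \<Theta>_le_reach: "y \<le> reach x \<Longrightarrow> \<Theta> y \<le> \<Theta> x + pi"
  using \<Theta>_mono[of y "reach x"] reach(2)[of x] by simp

lemma \<Theta>_reach_reach: "\<Theta> x + pi \<le> \<Theta> (reach (reach x))"
proof -
  let ?y = "reach x"
  have "\<Theta> x + pi < \<Theta> (?y + 1)"
    using reach_maximal[of x "?y + 1"] reach(1)[of x] by force
  moreover have "?y + 1 \<le> reach ?y"
    using reach_maximal[of ?y "?y + 1"] \<Theta>_gap_le_pi[of ?y "?y + 1"] depth_pos by simp
  ultimately show ?thesis
    using \<Theta>_mono[of "?y + 1" "reach ?y"] by simp
qed

text \<open>Read cyclically (\<open>\<Theta> n = \<Theta> 0 + 2\<pi>\<close>), the indices \<open>0, j\<^sub>1, j\<^sub>2\<close> are at least \<open>d\<close>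
  apart and consecutive ones are at most half a turn apart in angle.\<close>
definition spread_triple :: "nat \<Rightarrow> nat \<Rightarrow> bool" where
  "spread_triple j\<^sub>1 j\<^sub>2 \<longleftrightarrow> d \<le> j\<^sub>1 \<and> j\<^sub>1 + d \<le> j\<^sub>2 \<and> j\<^sub>2 + d \<le> n \<and>
     \<Theta> j\<^sub>1 \<le> \<Theta> 0 + pi \<and> \<Theta> j\<^sub>2 \<le> \<Theta> j\<^sub>1 + pi \<and> \<Theta> 0 + pi \<le> \<Theta> j\<^sub>2"

lemma spread_triple_exists:
  assumes "3 * d \<le> n"
  obtains j\<^sub>1 j\<^sub>2 where "spread_triple j\<^sub>1 j\<^sub>2"
proof -
  define x\<^sub>1 where "x\<^sub>1 = min (reach 0) (int n - 2 * int d)"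
  define x\<^sub>2 where "x\<^sub>2 = min (reach x\<^sub>1) (int n - int d)"
  have gaps: "int d \<le> x\<^sub>1" "x\<^sub>1 + int d \<le> x\<^sub>2" "x\<^sub>2 + int d \<le> int n"
    unfolding x\<^sub>2_def x\<^sub>1_def using reach_ge[of 0] reach_ge[of x\<^sub>1] assms x\<^sub>1_def by auto
  have "\<Theta> x\<^sub>1 \<le> \<Theta> 0 + pi" "\<Theta> x\<^sub>2 \<le> \<Theta> x\<^sub>1 + pi"
    using \<Theta>_le_reach[of x\<^sub>1 0] \<Theta>_le_reach[of x\<^sub>2 x\<^sub>1] x\<^sub>1_def x\<^sub>2_def by simp_all
  moreover have "\<Theta> 0 + pi \<le> \<Theta> x\<^sub>2"
  proof (cases "x\<^sub>2 = int n - int d")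
    case True
    then show ?thesis
      using \<Theta>_gap_le_pi[of x\<^sub>2 "0 + int n"] \<Theta>_periodic[of 0] by simp
  next
    case False
    then have "x\<^sub>2 = reach x\<^sub>1" unfolding x\<^sub>2_def by linarith
    moreover have "x\<^sub>1 = reach 0"
    proof (rule ccontr)
      assume "x\<^sub>1 \<noteq> reach 0"
      then have "x\<^sub>1 = int n - 2 * int d" unfolding x\<^sub>1_def by linarith
      then show False
        using False reach_ge[of x\<^sub>1] \<open>x\<^sub>2 = reach x\<^sub>1\<close> unfolding x\<^sub>2_def by linarith
    qed
    ultimately show ?thesis using \<Theta>_reach_reach[of 0] by simp
  qed
  moreover obtain j\<^sub>1 where "x\<^sub>1 = int j\<^sub>1"
    using gaps(1) by (metis of_nat_0_le_iff order_trans nonneg_int_cases)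
  moreover obtain j\<^sub>2 where "x\<^sub>2 = int j\<^sub>2"
    using gaps(1,2) by (metis of_nat_0_le_iff order_trans le_add_same_cancel1 nonneg_int_cases)
  ultimately have "spread_triple j\<^sub>1 j\<^sub>2"
    using gaps unfolding spread_triple_def by simp
  then show thesis by (rule that)
qed

lemma spread_triple_meets_half_circle:
  assumes "spread_triple j\<^sub>1 j\<^sub>2"
  shows "\<exists>t\<in>{0, j\<^sub>1, j\<^sub>2}. in_half_circle \<alpha> (\<Theta> t)"
proof -
  obtain k :: int where k: "\<Theta> 0 \<le> \<alpha> + 2*pi*k" "\<alpha> + 2*pi*k < \<Theta> 0 + 2*pi"
    by (rule shift_into_period)
  have spread: "\<Theta> j\<^sub>1 \<le> \<Theta> 0 + pi" "\<Theta> j\<^sub>2 \<le> \<Theta> j\<^sub>1 + pi" "\<Theta> 0 + pi \<le> \<Theta> j\<^sub>2"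
    using assms unfolding spread_triple_def by simp_all
  consider "\<alpha> + 2*pi*k \<le> \<Theta> j\<^sub>1" | "\<Theta> j\<^sub>1 < \<alpha> + 2*pi*k" "\<alpha> + 2*pi*k \<le> \<Theta> j\<^sub>2"
    | "\<Theta> j\<^sub>2 < \<alpha> + 2*pi*k" by linarith
  then show ?thesis
  proof cases
    case 1
    then have "\<alpha> \<le> \<Theta> j\<^sub>1 + 2*pi*(-k) \<and> \<Theta> j\<^sub>1 + 2*pi*(-k) \<le> \<alpha> + pi"
      using k spread by simp
    then show ?thesis unfolding in_half_circle_def by blast
  next
    case 2
    then have "\<alpha> \<le> \<Theta> j\<^sub>2 + 2*pi*(-k) \<and> \<Theta> j\<^sub>2 + 2*pi*(-k) \<le> \<alpha> + pi"
      using k spread by simp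
    then show ?thesis unfolding in_half_circle_def by blast
  next
    case 3
    then have "\<alpha> \<le> \<Theta> 0 + 2*pi*(1 - k) \<and> \<Theta> 0 + 2*pi*(1 - k) \<le> \<alpha> + pi"
      using k spread by (simp add: algebra_simps)
    then show ?thesis unfolding in_half_circle_def by (metis insertI1 of_nat_0)
  qed
qed

end

lemma int_mod_separated:
  fixes a b t t' :: int and j\<^sub>1 j\<^sub>2 n d :: nat
  assumes "d \<le> j\<^sub>1" "j\<^sub>1 + d \<le> j\<^sub>2" "j\<^sub>2 + d \<le> n"
    and "t \<in> {0, int j\<^sub>1, int j\<^sub>2}" "t' \<in> {0, int j\<^sub>1, int j\<^sub>2}" "t \<noteq> t'"
    and "a mod int n = t mod int n" "b mod int n = t' mod int n"
  shows "int d \<le> \<bar>a - b\<bar>"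
proof -
  obtain c where c: "a - b = (t - t') + int n * c"
    using assms(7,8) by (metis dvdE mod_diff_cong mod_eq_dvd_iff diff_add_cancel add.commute)
  have tt: "int d \<le> \<bar>t - t'\<bar>" "\<bar>t - t'\<bar> \<le> int n - int d"
    using assms(1-6) by auto
  have abs_bounds: "- \<bar>x\<bar> \<le> x" "x \<le> \<bar>x\<bar>" for x :: int
    by simp_all
  consider "c = 0" | "1 \<le> c" | "c \<le> -1" by linarith
  then show ?thesis
  proof cases
    case 1
    then show ?thesis using c tt by simp
  next
    case 2
    then have "int n * 1 \<le> int n * c" by (intro mult_left_mono) simp_all
    then show ?thesis using c tt abs_bounds[of "t - t'"] abs_bounds[of "a - b"] by linarith
  next
    case 3
    then have "int n * c \<le> int n * -1" by (intro mult_left_mono) simp_all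
    then show ?thesis using c tt abs_bounds[of "t - t'"] abs_bounds[of "a - b"] by linarith
  qed
qed

lemma abs_diff_less_card_interval:
  fixes I :: "int set"
  assumes "finite I" "\<And>a b. a \<in> I \<Longrightarrow> b \<in> I \<Longrightarrow> {a..b} \<subseteq> I" "a \<in> I" "b \<in> I"
  shows "\<bar>a - b\<bar> < int (card I)"
proof -
  have "card {a..b} \<le> card I" "card {b..a} \<le> card I"
    using card_mono[OF assms(1) assms(2)[OF assms(3,4)]] card_mono[OF assms(1) assms(2)[OF assms(4,3)]] .
  then show ?thesis by (cases "a \<le> b") auto
qed

text \<open>Representatives in \<open>I\<close> of distinct residue classes among \<open>0, j\<^sub>1, j\<^sub>2\<close> modulo \<open>n\<close>
  are at least \<open>d\<close> apart.\<close>
lemma card_residues_in_interval: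
  fixes I T :: "int set" and j\<^sub>1 j\<^sub>2 n d :: nat
  assumes fin: "finite I" and interval: "\<And>a b. a \<in> I \<Longrightarrow> b \<in> I \<Longrightarrow> {a..b} \<subseteq> I"
    and "d \<le> card I" "1 \<le> d"
    and spread: "d \<le> j\<^sub>1" "j\<^sub>1 + d \<le> j\<^sub>2" "j\<^sub>2 + d \<le> n"
    and T: "T \<subseteq> {0, int j\<^sub>1, int j\<^sub>2}"
    and lift: "\<And>t. t \<in> T \<Longrightarrow> \<exists>i\<in>I. i mod int n = t mod int n"
  shows "card T + d \<le> card I + 1"
proof -
  have apart: "int d \<le> \<bar>a - b\<bar>"
    if "a mod int n = t mod int n" "b mod int n = t' mod int n" "t \<in> T" "t' \<in> T" "t \<noteq> t'"
    for a b t t'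
    using int_mod_separated[OF spread _ _ \<open>t \<noteq> t'\<close> that(1,2)] that(3,4) T by blast
  note width = abs_diff_less_card_interval[OF fin interval]
  have "card T \<le> card {0, int j\<^sub>1, int j\<^sub>2}" by (rule card_mono[OF _ T]) simp
  also have "\<dots> \<le> 3" by (simp add: card_insert_if)
  finally consider "card T \<le> 1" | "card T = 2" | "card T = 3" by linarith
  then show ?thesis
  proof cases
    case 1
    then show ?thesis using \<open>d \<le> card I\<close> by simp
  next
    case 2
    then obtain t t' where tt: "T = {t, t'}" "t \<noteq> t'" unfolding card_2_iff by blast
    then have "t \<in> T" "t' \<in> T" by simp_all
    then obtain a b where "a \<in> I" "a mod int n = t mod int n" "b \<in> I" "b mod int n = t' mod int n"
      using lift by metis
    then have "int d + 1 \<le> int (card I)"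
      using apart[of a t b t'] width[of a b] \<open>t \<in> T\<close> \<open>t' \<in> T\<close> tt(2) by linarith
    then show ?thesis using 2 by simp
  next
    case 3
    then have "T = {0, int j\<^sub>1, int j\<^sub>2}"
      using card_seteq[OF _ T] \<open>card {0, int j\<^sub>1, int j\<^sub>2} \<le> 3\<close> by simp
    then have in_T: "0 \<in> T" "int j\<^sub>1 \<in> T" "int j\<^sub>2 \<in> T" by simp_all
    then obtain a b c where abc: "a \<in> I" "a mod int n = 0 mod int n"
      "b \<in> I" "b mod int n = int j\<^sub>1 mod int n" "c \<in> I" "c mod int n = int j\<^sub>2 mod int n"
      using lift by metis
    have "0 \<noteq> int j\<^sub>1" "int j\<^sub>1 \<noteq> int j\<^sub>2" "0 \<noteq> int j\<^sub>2"
      using spread \<open>1 \<le> d\<close> by auto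
    then have "int d \<le> \<bar>a - b\<bar>" "int d \<le> \<bar>b - c\<bar>" "int d \<le> \<bar>a - c\<bar>"
      using apart[of a 0 b "int j\<^sub>1"] apart[of b "int j\<^sub>1" c "int j\<^sub>2"] apart[of a 0 c "int j\<^sub>2"]
        abc in_T by simp_all
    then have "2 * int d \<le> \<bar>a - b\<bar> \<or> 2 * int d \<le> \<bar>b - c\<bar> \<or> 2 * int d \<le> \<bar>a - c\<bar>"
      by arith
    then have "2 * int d + 1 \<le> int (card I)"
      using width[of a b] width[of b c] width[of a c] abc by linarith
    then show ?thesis using 3 \<open>1 \<le> d\<close> by linarith
  qed
qed

locale angle_sorted =
  fixes xs :: "(real^2) list"
  assumes sorted_angles: "sorted (map polar_angle xs)" and nonempty: "xs \<noteq> []"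
begin

abbreviation n :: nat where "n \<equiv> length xs"

definition \<Theta> :: "int \<Rightarrow> real" where
  "\<Theta> i = polar_angle (xs ! nat (i mod int n)) + 2*pi * of_int (i div int n)"

lemma \<Theta>_lift: "j < n \<Longrightarrow> \<Theta> (int j + k * int n) = polar_angle (xs ! j) + 2*pi * of_int k"
  using nonempty by (simp add: \<Theta>_def)

lemma \<Theta>_nth: "j < n \<Longrightarrow> \<Theta> (int j) = polar_angle (xs ! j)"
  using \<Theta>_lift[of j 0] by simp

lemma \<Theta>_mono:
  assumes "i \<le> j"
  shows "\<Theta> i \<le> \<Theta> j"
proof -
  have n: "0 < int n" using nonempty by simp
  have sorted: "polar_angle (xs ! nat (i mod int n)) \<le> polar_angle (xs ! nat (j mod int n))"
    if "i mod int n \<le> j mod int n"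
  proof (rule sorted_nth_mono[OF sorted_angles, of "nat (i mod int n)" "nat (j mod int n)", simplified])
    show "nat (i mod int n) \<le> nat (j mod int n)" using that by (rule nat_mono)
    show "nat (j mod int n) < n" using n by (simp add: nat_less_iff)
  qed
  have "i div int n \<le> j div int n" using assms n by (simp add: zdiv_mono1)
  then consider "i div int n = j div int n" | "i div int n + 1 \<le> j div int n" by linarith
  then show ?thesis
  proof cases
    case 1
    have "i = int n * (j div int n) + i mod int n" by (simp flip: 1)
    moreover have "j = int n * (j div int n) + j mod int n" by simp
    ultimately have "i mod int n \<le> j mod int n"
      using assms by linarith
    then show ?thesis using 1 sorted unfolding \<Theta>_def by simp
  next
    case 2
    then have "2*pi * of_int (i div int n + 1) \<le> 2*pi * of_int (j div int n)" by simp
    then show ?thesis unfolding \<Theta>_def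
      using polar_angle_bounds[of "xs ! nat (i mod int n)"] polar_angle_bounds[of "xs ! nat (j mod int n)"]
      by (simp add: algebra_simps)
  qed
qed

lemma \<Theta>_periodic: "\<Theta> (i + int n) = \<Theta> i + 2*pi"
  unfolding \<Theta>_def using nonempty by (simp add: algebra_simps)

lemma half_circle_lift:
  assumes "j < n" "in_half_circle \<alpha> (polar_angle (xs ! j))"
  obtains i where "\<alpha> \<le> \<Theta> i" "\<Theta> i \<le> \<alpha> + pi" "i mod int n = int j"
proof -
  obtain k :: int where "\<alpha> \<le> polar_angle (xs ! j) + 2*pi*k" "polar_angle (xs ! j) + 2*pi*k \<le> \<alpha> + pi"
    using assms(2) unfolding in_half_circle_def by blast
  then show thesis
    using that[of "int j + k * int n"] \<Theta>_lift[OF assms(1)] assms(1) by simp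
qed

lemma half_circle_index_eq:
  assumes "i \<in> {i. \<alpha> \<le> \<Theta> i \<and> \<Theta> i \<le> \<alpha> + pi}" "i' \<in> {i. \<alpha> \<le> \<Theta> i \<and> \<Theta> i \<le> \<alpha> + pi}"
    and "i mod int n = i' mod int n"
  shows "i = i'"
proof (rule ccontr)
  assume "i \<noteq> i'"
  have dvd: "int n dvd i - i'"
    using assms(3) by (simp add: mod_eq_dvd_iff)
  then have "int n dvd i' - i"
    by (subst minus_diff_eq[symmetric]) (simp only: dvd_minus_iff)
  with dvd have "int n dvd max i i' - min i i'"
    by (cases "i \<le> i'") (simp_all add: max_def min_def)
  then have "min i i' + int n \<le> max i i'"
    using zdvd_imp_le[of "int n" "max i i' - min i i'"] \<open>i \<noteq> i'\<close>
    by (cases "i \<le> i'") (simp_all add: min_def max_def)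
  then have "\<Theta> (min i i' + int n) \<le> \<Theta> (max i i')" by (rule \<Theta>_mono)
  then have "\<Theta> (min i i') + 2*pi \<le> \<Theta> (max i i')" by (simp only: \<Theta>_periodic)
  moreover have "min i i' \<in> {i. \<alpha> \<le> \<Theta> i \<and> \<Theta> i \<le> \<alpha> + pi}"
    "max i i' \<in> {i. \<alpha> \<le> \<Theta> i \<and> \<Theta> i \<le> \<alpha> + pi}"
    using assms(1,2) by (simp_all add: min_def max_def)
  ultimately show False using pi_gt_zero by simp
qed

lemma card_half_circle_indices:
  "card {i. \<alpha> \<le> \<Theta> i \<and> \<Theta> i \<le> \<alpha> + pi} = card {j. j < n \<and> in_half_circle \<alpha> (polar_angle (xs ! j))}"
proof -
  let ?I = "{i. \<alpha> \<le> \<Theta> i \<and> \<Theta> i \<le> \<alpha> + pi}"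
  have n: "0 < int n" using nonempty by simp
  have "bij_betw (\<lambda>i. nat (i mod int n)) ?I {j. j < n \<and> in_half_circle \<alpha> (polar_angle (xs ! j))}"
  proof (rule bij_betw_imageI)
    show "inj_on (\<lambda>i. nat (i mod int n)) ?I"
    proof (rule inj_onI)
      fix i i' assume "i \<in> ?I" "i' \<in> ?I" and "nat (i mod int n) = nat (i' mod int n)"
      then have "i mod int n = i' mod int n" using n by (subst (asm) eq_nat_nat_iff) simp_all
      then show "i = i'" by (rule half_circle_index_eq[OF \<open>i \<in> ?I\<close> \<open>i' \<in> ?I\<close>])
    qed
    show "(\<lambda>i. nat (i mod int n)) ` ?I = {j. j < n \<and> in_half_circle \<alpha> (polar_angle (xs ! j))}"
    proof (intro equalityI subsetI)
      fix j assume "j \<in> (\<lambda>i. nat (i mod int n)) ` ?I"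
      then obtain i where i: "i \<in> ?I" "j = nat (i mod int n)" by blast
      then have "j < n" using n by (simp add: nat_less_iff)
      moreover have "\<Theta> i = polar_angle (xs ! j) + 2*pi * of_int (i div int n)"
        unfolding \<Theta>_def i(2) ..
      ultimately show "j \<in> {j. j < n \<and> in_half_circle \<alpha> (polar_angle (xs ! j))}"
        using i(1) unfolding in_half_circle_def by auto
    next
      fix j assume "j \<in> {j. j < n \<and> in_half_circle \<alpha> (polar_angle (xs ! j))}"
      then have "j < n" "in_half_circle \<alpha> (polar_angle (xs ! j))" by simp_all
      then obtain i where "\<alpha> \<le> \<Theta> i" "\<Theta> i \<le> \<alpha> + pi" "i mod int n = int j"
        by (rule half_circle_lift)
      then have "j = nat (i mod int n)" "i \<in> ?I" by simp_all
      then show "j \<in> (\<lambda>i. nat (i mod int n)) ` ?I" by (rule image_eqI)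
    qed
  qed
  then show ?thesis by (rule bij_betw_same_card)
qed

end

section \<open>Birch's partition theorem\<close>

definition halfplane_depth :: "(real^2) multiset \<Rightarrow> nat \<Rightarrow> bool" where
  "halfplane_depth M d \<longleftrightarrow> (\<forall>u. d \<le> size (filter_mset (\<lambda>z. 0 \<le> inner u z) M))"

lemma separate_zero_from_finite:
  fixes X :: "(real^2) set"
  assumes "finite X" "0 \<notin> convex hull X"
  obtains u where "u \<noteq> 0" "\<And>x. x \<in> X \<Longrightarrow> inner u x < 0"
proof -
  have "closed (convex hull X)"
    using assms(1) by (simp add: compact_imp_closed finite_imp_compact_convex_hull)
  then obtain a b where "a \<noteq> 0" "0 < b" "\<forall>x\<in>convex hull X. inner a x > b"
    using separating_hyperplane_closed_0[OF convex_convex_hull _ assms(2)] by blast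
  then have "-a \<noteq> 0" "\<And>x. x \<in> X \<Longrightarrow> inner (-a) x < 0"
    using hull_subset[of X convex] by force+
  then show thesis by (rule that)
qed

lemma size_filter_image_mset_set:
  "finite J \<Longrightarrow> size (filter_mset P (image_mset f (mset_set J))) = card {j\<in>J. P (f j)}"
  by (simp add: filter_mset_image_mset)

locale deep_angle_sorted = angle_sorted +
  fixes d :: nat
  assumes nonzero: "0 \<notin> set xs"
    and deep: "halfplane_depth (mset xs) d"
    and two_le_depth: "2 \<le> d"
    and long: "3 * d \<le> length xs"
begin

lemma mset_xs: "mset xs = image_mset (nth xs) (mset_set {0..<n})"
proof -
  have "mset xs = mset (map (nth xs) [0..<n])" by (simp add: map_nth)
  then show ?thesis by (simp only: mset_map mset_upt)
qed

lemma nth_nonzero: "j < n \<Longrightarrow> xs ! j \<noteq> 0"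
  using nonzero nth_mem by fastforce

lemma inner_nonneg_iff_in_half_circle_nth:
  "u \<noteq> 0 \<Longrightarrow> j < n \<Longrightarrow>
    0 \<le> inner u (xs ! j) \<longleftrightarrow> in_half_circle (polar_angle u - pi/2) (polar_angle (xs ! j))"
  by (rule inner_nonneg_iff_in_half_circle[OF _ nth_nonzero])

lemma half_circle_card: "d \<le> card {i. \<alpha> \<le> \<Theta> i \<and> \<Theta> i \<le> \<alpha> + pi}"
proof -
  let ?u = "vector [cos (\<alpha> + pi/2), sin (\<alpha> + pi/2)] :: real^2"
  have "d \<le> size (filter_mset (\<lambda>z. 0 \<le> inner ?u z) (mset xs))"
    using deep unfolding halfplane_depth_def by blast
  also have "\<dots> = card {j\<in>{0..<n}. 0 \<le> inner ?u (xs ! j)}"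
    unfolding mset_xs by (simp add: size_filter_image_mset_set)
  also have "{j\<in>{0..<n}. 0 \<le> inner ?u (xs ! j)} = {j. j < n \<and> in_half_circle \<alpha> (polar_angle (xs ! j))}"
    using inner_unit_nonneg_iff_in_half_circle[OF nth_nonzero] by auto
  finally show ?thesis unfolding card_half_circle_indices .
qed

sublocale circle: angular_sequence \<Theta> n d
  using \<Theta>_mono \<Theta>_periodic half_circle_card two_le_depth by unfold_locales auto

lemma zero_in_hull_spread_triple:
  assumes "circle.spread_triple j\<^sub>1 j\<^sub>2"
  shows "0 \<in> convex hull {xs ! 0, xs ! j\<^sub>1, xs ! j\<^sub>2}"
proof (rule ccontr)
  assume "0 \<notin> convex hull {xs ! 0, xs ! j\<^sub>1, xs ! j\<^sub>2}"
  moreover have "finite {xs ! 0, xs ! j\<^sub>1, xs ! j\<^sub>2}" by simp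
  ultimately obtain u where u: "u \<noteq> 0" "\<And>x. x \<in> {xs ! 0, xs ! j\<^sub>1, xs ! j\<^sub>2} \<Longrightarrow> inner u x < 0"
    using separate_zero_from_finite by blast
  obtain j where j: "j \<in> {0, j\<^sub>1, j\<^sub>2}" "in_half_circle (polar_angle u - pi/2) (\<Theta> j)"
    using circle.spread_triple_meets_half_circle[OF assms] by blast
  moreover have "j < n"
    using j assms two_le_depth unfolding circle.spread_triple_def by auto
  ultimately have "in_half_circle (polar_angle u - pi/2) (polar_angle (xs ! j))"
    using \<Theta>_nth by simp
  then have "0 \<le> inner u (xs ! j)"
    using inner_nonneg_iff_in_half_circle_nth[OF u(1) \<open>j < n\<close>] by simp
  then show False using u(2)[of "xs ! j"] j by auto
qed

text \<open>The points in a closed half-plane through the origin occupy a cyclic interval of at least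
  \<open>d\<close> consecutive indices, while \<open>0, j\<^sub>1, j\<^sub>2\<close> are cyclically \<open>d\<close> apart.\<close>
lemma card_spread_triple_in_half_plane:
  assumes spread: "circle.spread_triple j\<^sub>1 j\<^sub>2" and "u \<noteq> 0"
  shows "card {j\<in>{0, j\<^sub>1, j\<^sub>2}. 0 \<le> inner u (xs ! j)} + d
    \<le> card {j\<in>{0..<n}. 0 \<le> inner u (xs ! j)} + 1"
proof -
  let ?T = "{0, j\<^sub>1, j\<^sub>2}" and ?P = "\<lambda>z. 0 \<le> inner u z"
  define \<alpha> where "\<alpha> = polar_angle u - pi/2"
  let ?I = "{i. \<alpha> \<le> \<Theta> i \<and> \<Theta> i \<le> \<alpha> + pi}"
  have gaps: "d \<le> j\<^sub>1" "j\<^sub>1 + d \<le> j\<^sub>2" "j\<^sub>2 + d \<le> n"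
    using spread unfolding circle.spread_triple_def by simp_all
  have P_iff: "?P (xs ! j) \<longleftrightarrow> in_half_circle \<alpha> (polar_angle (xs ! j))" if "j < n" for j
    unfolding \<alpha>_def by (rule inner_nonneg_iff_in_half_circle_nth[OF \<open>u \<noteq> 0\<close> that])
  have card_I: "card {j\<in>{0..<n}. ?P (xs ! j)} = card ?I"
    unfolding card_half_circle_indices using P_iff by (intro arg_cong[of _ _ card]) auto
  have "d \<le> card ?I" by (rule half_circle_card)
  then have fin: "finite ?I" using two_le_depth by (intro card_ge_0_finite) simp
  have interval: "{a..b} \<subseteq> ?I" if "a \<in> ?I" "b \<in> ?I" for a b
  proof
    fix i assume "i \<in> {a..b}"
    then show "i \<in> ?I" using that \<Theta>_mono[of a i] \<Theta>_mono[of i b] by auto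
  qed
  have "int ` {j\<in>?T. ?P (xs ! j)} \<subseteq> int ` ?T" by (rule image_mono) blast
  also have "int ` ?T = {0, int j\<^sub>1, int j\<^sub>2}" by simp
  finally have sub: "int ` {j\<in>?T. ?P (xs ! j)} \<subseteq> {0, int j\<^sub>1, int j\<^sub>2}" .
  have lift: "\<exists>i\<in>?I. i mod int n = t mod int n" if t: "t \<in> int ` {j\<in>?T. ?P (xs ! j)}" for t
  proof -
    obtain j where "j \<in> {j\<in>?T. ?P (xs ! j)}" "t = int j" using t by (rule imageE)
    then have j: "j \<in> ?T" "?P (xs ! j)" "t = int j" by simp_all
    then have "j < n" using gaps two_le_depth by auto
    moreover from this have "in_half_circle \<alpha> (polar_angle (xs ! j))" using P_iff j(2) by simp
    ultimately obtain i where "\<alpha> \<le> \<Theta> i" "\<Theta> i \<le> \<alpha> + pi" "i mod int n = int j"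
      by (rule half_circle_lift)
    then show ?thesis using j(3) \<open>j < n\<close> by auto
  qed
  have "card (int ` {j\<in>?T. ?P (xs ! j)}) + d \<le> card ?I + 1"
    using card_residues_in_interval[OF fin interval \<open>d \<le> card ?I\<close> _ gaps sub lift] two_le_depth
    by simp
  then show ?thesis unfolding card_I by (simp add: card_image)
qed

lemma depth_without_spread_triple:
  assumes spread: "circle.spread_triple j\<^sub>1 j\<^sub>2"
  shows "halfplane_depth (image_mset (nth xs) (mset_set ({0..<n} - {0, j\<^sub>1, j\<^sub>2}))) (d - 1)"
  unfolding halfplane_depth_def
proof
  fix u :: "real^2"
  let ?T = "{0, j\<^sub>1, j\<^sub>2}" and ?P = "\<lambda>z. 0 \<le> inner u z"
  have T: "?T \<subseteq> {0..<n}" "card ?T = 3"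
    using spread two_le_depth unfolding circle.spread_triple_def by auto
  have "size (filter_mset ?P (image_mset (nth xs) (mset_set ({0..<n} - ?T))))
      = card {j\<in>{0..<n} - ?T. ?P (xs ! j)}"
    by (simp add: size_filter_image_mset_set)
  also have "{j\<in>{0..<n} - ?T. ?P (xs ! j)} = {j\<in>{0..<n}. ?P (xs ! j)} - {j\<in>?T. ?P (xs ! j)}"
    by blast
  also have "card \<dots> = card {j\<in>{0..<n}. ?P (xs ! j)} - card {j\<in>?T. ?P (xs ! j)}"
    using T by (intro card_Diff_subset) auto
  finally have size_eq: "size (filter_mset ?P (image_mset (nth xs) (mset_set ({0..<n} - ?T))))
      = card {j\<in>{0..<n}. ?P (xs ! j)} - card {j\<in>?T. ?P (xs ! j)}" .
  show "d - 1 \<le> size (filter_mset ?P (image_mset (nth xs) (mset_set ({0..<n} - ?T))))"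
  proof (cases "u = 0")
    case True
    then have "{j\<in>{0..<n}. ?P (xs ! j)} = {0..<n}" "{j\<in>?T. ?P (xs ! j)} = ?T" by auto
    then show ?thesis unfolding size_eq using T long two_le_depth by simp
  next
    case False
    then show ?thesis
      unfolding size_eq using card_spread_triple_in_half_plane[OF spread False] by linarith
  qed
qed

end

lemma exists_zero_capturing_triple_nonzero:
  fixes M :: "(real^2) multiset"
  assumes "0 \<notin># M" "halfplane_depth M d" "2 \<le> d" "3 * d \<le> size M"
  obtains B where "B \<subseteq># M" "size B \<le> 3" "0 \<in> convex hull set_mset B"
    "halfplane_depth (M - B) (d - 1)"
proof -
  obtain ys where "mset ys = M" using ex_mset by blast
  define xs where "xs = sort_key polar_angle ys"
  have M: "M = mset xs" unfolding xs_def using \<open>mset ys = M\<close> by simp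
  have "sorted (map polar_angle xs)" unfolding xs_def by (rule sorted_sort_key)
  moreover have "xs \<noteq> []" using assms(3,4) unfolding M by auto
  ultimately interpret deep_angle_sorted xs d
    using assms unfolding M by unfold_locales simp_all
  obtain j\<^sub>1 j\<^sub>2 where spread: "circle.spread_triple j\<^sub>1 j\<^sub>2"
    using circle.spread_triple_exists long by blast
  define T where "T = {0, j\<^sub>1, j\<^sub>2}"
  have T: "T \<subseteq> {0..<n}" "card T = 3"
    using spread two_le_depth unfolding circle.spread_triple_def T_def by auto
  define B where "B = image_mset (nth xs) (mset_set T)"
  have sub: "mset_set T \<subseteq># mset_set {0..<n}"
    using T by (simp add: subset_imp_msubset_mset_set)
  have "B \<subseteq># M"
    unfolding B_def M mset_xs by (rule image_mset_subseteq_mono[OF sub])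
  moreover have "size B \<le> 3" unfolding B_def using T by simp
  moreover have "0 \<in> convex hull set_mset B"
    using zero_in_hull_spread_triple[OF spread] unfolding B_def T_def by simp
  moreover have "M - B = image_mset (nth xs) (mset_set ({0..<n} - T))"
    unfolding B_def M mset_xs image_mset_Diff[OF sub] mset_set_Diff[OF finite_atLeastLessThan T(1)] ..
  then have "halfplane_depth (M - B) (d - 1)"
    using depth_without_spread_triple[OF spread] unfolding T_def by simp
  ultimately show thesis by (rule that)
qed

lemma exists_zero_capturing_triple:
  fixes M :: "(real^2) multiset"
  assumes "halfplane_depth M d" "2 \<le> d" "3 * d \<le> size M"
  obtains B where "B \<subseteq># M" "size B \<le> 3" "0 \<in> convex hull set_mset B"
    "halfplane_depth (M - B) (d - 1)"
proof (cases "0 \<in># M")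
  case True
  have "halfplane_depth (M - {#0#}) (d - 1)"
    unfolding halfplane_depth_def
  proof
    fix u :: "real^2"
    have "size (filter_mset (\<lambda>z. 0 \<le> inner u z) (M - {#0#}))
        = size (filter_mset (\<lambda>z. 0 \<le> inner u z) M) - 1"
      using True by (simp add: size_Diff_singleton)
    then show "d - 1 \<le> size (filter_mset (\<lambda>z. 0 \<le> inner u z) (M - {#0#}))"
      using assms(1) unfolding halfplane_depth_def by (metis diff_le_mono)
  qed
  then show thesis using that[of "{#0#}"] True by simp
next
  case False
  then show thesis using exists_zero_capturing_triple_nonzero assms that by blast
qed

lemma zero_in_convex_hull_if_halfplane_depth:
  assumes "halfplane_depth M d" "0 < d"
  shows "0 \<in> convex hull set_mset M"
proof (rule ccontr)
  assume "0 \<notin> convex hull set_mset M"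
  then obtain u where "\<And>x. x \<in># M \<Longrightarrow> inner u x < 0"
    using separate_zero_from_finite[of "set_mset M"] by blast
  then have "filter_mset (\<lambda>z. 0 \<le> inner u z) M = {#}"
    by (auto simp: filter_mset_eq_conv not_le)
  then show False using assms unfolding halfplane_depth_def by (metis size_empty not_le)
qed

theorem birch_partition:
  fixes M :: "(real^2) multiset"
  assumes "0 < m" "halfplane_depth M m" "3 * m \<le> size M"
  shows "\<exists>A. (\<Sum>i<m. A i) = M \<and> (\<forall>i<m. 0 \<in> convex hull set_mset (A i))"
  using assms
proof (induction m arbitrary: M rule: nat_induct_non_zero)
  case 1
  then show ?case using zero_in_convex_hull_if_halfplane_depth by auto
next
  case (Suc m)
  obtain B where B: "B \<subseteq># M" "size B \<le> 3" "0 \<in> convex hull set_mset B"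
    "halfplane_depth (M - B) m"
    using exists_zero_capturing_triple[OF Suc.prems(1) _ Suc.prems(2)] Suc.hyps(1) by auto
  have "3 * m \<le> size (M - B)"
    using Suc.prems(2) B(1,2) by (simp add: size_Diff_submset)
  then obtain A where A: "(\<Sum>i<m. A i) = M - B" "\<forall>i<m. 0 \<in> convex hull set_mset (A i)"
    using Suc.IH[OF B(4)] by blast
  have "(\<Sum>i<Suc m. (A(m := B)) i) = M"
    using A(1) B(1) by (simp add: subset_mset.diff_add)
  moreover have "\<forall>i<Suc m. 0 \<in> convex hull set_mset ((A(m := B)) i)"
    using A(2) B(3) by (simp add: less_Suc_eq)
  ultimately show ?case by blast
qed

section \<open>Centerpoints and Tverberg numbers\<close>

lemma finite_msubsets: "finite {T. T \<subseteq># M}"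
proof (rule finite_subset)
  show "{T. T \<subseteq># M} \<subseteq> mset ` {ys. set ys \<subseteq> set_mset M \<and> length ys \<le> size M}"
  proof
    fix T assume "T \<in> {T. T \<subseteq># M}"
    moreover obtain ys where "mset ys = T" using ex_mset by blast
    ultimately have "set ys \<subseteq> set_mset M" "length ys \<le> size M"
      using set_mset_mono[of "mset ys" M] size_mset_mono[of "mset ys" M] by auto
    then show "T \<in> mset ` {ys. set ys \<subseteq> set_mset M \<and> length ys \<le> size M}"
      using \<open>mset ys = T\<close> by blast
  qed
  show "finite (mset ` {ys. set ys \<subseteq> set_mset M \<and> length ys \<le> size M})"
    by (intro finite_imageI finite_lists_length_le) simp
qed

text \<open>Helly's property applies to the hulls of \<open>M - T\<close>: any \<open>h\<close> of them share a point of
  \<open>M\<close>, since together they remove at most \<open>h * k < size M\<close> points.\<close>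
lemma helly_centerpoint:
  fixes S :: "(real^2) set" and M :: "(real^2) multiset"
  assumes helly: "helly_prop S h" and "set_mset M \<subseteq> S" and "h * k < size M"
  obtains p where "p \<in> S" "\<And>T. T \<subseteq># M \<Longrightarrow> size T \<le> k \<Longrightarrow> p \<in> convex hull set_mset (M - T)"
proof -
  define \<T> where "\<T> = {T. T \<subseteq># M \<and> size T \<le> k}"
  define hull_rest where "hull_rest T = convex hull set_mset (M - T)" for T
  have "finite \<T>" unfolding \<T>_def by (rule finite_subset[OF _ finite_msubsets[of M]]) blast
  have "\<Inter>G \<inter> S \<noteq> {}" if G: "G \<subseteq> hull_rest ` \<T>" "card G \<le> h" for G
  proof -
    obtain \<U> where \<U>: "\<U> \<subseteq> \<T>" "inj_on hull_rest \<U>" "G = hull_rest ` \<U>"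
      using G(1) unfolding subset_image_inj by blast
    have "finite \<U>" using \<open>finite \<T>\<close> \<U>(1) by (rule finite_subset[rotated])
    have "card \<U> \<le> h" using G(2) card_image[OF \<U>(2)] \<U>(3) by simp
    define R where "R = (\<Sum>T\<in>\<U>. T)"
    have "size T \<le> k" if "T \<in> \<U>" for T using \<U>(1) that unfolding \<T>_def by blast
    then have "size R \<le> card \<U> * k"
      unfolding R_def size_multiset_sum using sum_bounded_above[of \<U> size k] by simp
    also have "\<dots> \<le> h * k" using \<open>card \<U> \<le> h\<close> by simp
    finally have "size R < size M" using assms(3) by simp
    then have "0 < size (M - R)" using diff_size_le_size_Diff[of M R] by linarith
    then obtain x where "x \<in># M - R" by (metis multiset_nonemptyE size_empty less_irrefl)
    then have "x \<in> S" using assms(2) by (auto dest: in_diffD)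
    moreover have "x \<in> hull_rest T" if "T \<in> \<U>" for T
    proof -
      have "T \<subseteq># R"
        unfolding R_def sum.remove[OF \<open>finite \<U>\<close> that] by (rule mset_subset_eq_add_left)
      then have "count T x \<le> count R x" by (rule mset_subset_eq_count)
      then have "x \<in># M - T" using \<open>x \<in># M - R\<close> by (simp add: in_diff_count)
      then show ?thesis unfolding hull_rest_def by (simp add: hull_inc)
    qed
    ultimately show ?thesis using \<U>(3) by blast
  qed
  moreover have "finite (hull_rest ` \<T>)" "\<forall>C\<in>hull_rest ` \<T>. convex C"
    using \<open>finite \<T>\<close> unfolding hull_rest_def by auto
  ultimately have "\<Inter>(hull_rest ` \<T>) \<inter> S \<noteq> {}"
    using helly unfolding helly_prop_def by presburger
  then obtain p where "p \<in> S" "\<And>T. T \<in> \<T> \<Longrightarrow> p \<in> hull_rest T" by blast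
  then show thesis using that unfolding \<T>_def hull_rest_def by blast
qed

lemma halfplane_depth_translate:
  fixes M :: "(real^2) multiset"
  assumes "\<And>T. T \<subseteq># M \<Longrightarrow> size T \<le> k \<Longrightarrow> p \<in> convex hull set_mset (M - T)"
  shows "halfplane_depth (image_mset (\<lambda>x. x - p) M) (Suc k)"
  unfolding halfplane_depth_def
proof
  fix u :: "real^2"
  define T where "T = filter_mset (\<lambda>x. 0 \<le> inner u (x - p)) M"
  have "M = T + filter_mset (\<lambda>x. \<not> 0 \<le> inner u (x - p)) M"
    unfolding T_def by (rule multiset_partition)
  then have "M - T = filter_mset (\<lambda>x. \<not> 0 \<le> inner u (x - p)) M"
    by (metis add_diff_cancel_left')
  then have "convex hull set_mset (M - T) \<subseteq> {y. inner u y < inner u p}"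
    by (intro hull_minimal convex_halfspace_lt) (auto simp: inner_diff_right)
  then have "p \<notin> convex hull set_mset (M - T)" by auto
  moreover have "T \<subseteq># M" unfolding T_def by simp
  ultimately have "\<not> size T \<le> k" using assms by blast
  then show "Suc k \<le> size (filter_mset (\<lambda>z. 0 \<le> inner u z) (image_mset (\<lambda>x. x - p) M))"
    unfolding T_def by (simp add: filter_mset_image_mset)
qed

lemma tverberg_prop_if_helly_prop:
  assumes helly: "helly_prop S h" and "0 < m" "h * (m - 1) < N" "3 * m \<le> N"
  shows "tverberg_prop S m N"
  unfolding tverberg_prop_def
proof (intro allI impI)
  fix M :: "(real^2) multiset"
  assume M: "set_mset M \<subseteq> S \<and> size M = N"
  then obtain p where "p \<in> S"
    and p: "\<And>T. T \<subseteq># M \<Longrightarrow> size T \<le> m - 1 \<Longrightarrow> p \<in> convex hull set_mset (M - T)"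
    using helly_centerpoint[OF helly, of M "m - 1"] assms(3) by auto
  have "halfplane_depth (image_mset (\<lambda>x. x - p) M) m"
    using halfplane_depth_translate[of M "m - 1" p] p \<open>0 < m\<close> by simp
  then obtain A where A: "(\<Sum>i<m. A i) = image_mset (\<lambda>x. x - p) M"
    "\<forall>i<m. 0 \<in> convex hull set_mset (A i)"
    using birch_partition[OF \<open>0 < m\<close>] assms(4) M by fastforce
  define A' where "A' i = image_mset ((+) p) (A i)" for i
  have "(\<Sum>i<m. A' i) = image_mset ((+) p) (\<Sum>i<m. A i)"
    unfolding A'_def using sum_comp_morphism[of "image_mset ((+) p)" A] by (simp add: o_def)
  also have "\<dots> = M" unfolding A(1) by (simp add: multiset.map_comp o_def)
  finally have "(\<Sum>i<m. A' i) = M" .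
  moreover have "p \<in> convex hull set_mset (A' i)" if "i < m" for i
    using A(2) that image_eqI[of p "(+) p" 0]
    unfolding A'_def set_image_mset convex_hull_translation by auto
  ultimately show "\<exists>A. (\<Sum>i<m. A i) = M \<and> (\<Inter>i<m. convex hull set_mset (A i)) \<inter> S \<noteq> {}"
    using \<open>p \<in> S\<close> by blast
qed

lemma tverberg_number_le:
  assumes "tverberg_prop S m N" "0 < N"
  shows "tverberg_number S m \<le> enat N"
  using assms Least_le[of "\<lambda>n. 0 < n \<and> tverberg_prop S m n" N]
  unfolding tverberg_number_def by auto

lemma helly_prop_helly_number:
  assumes "helly_number S = enat h"
  shows "helly_prop S h"
proof -
  have "\<exists>h>0. helly_prop S h"
    using assms unfolding helly_number_def by (metis enat.distinct(1))
  then have "h = (LEAST h. h > 0 \<and> helly_prop S h)" "(\<exists>h. h > 0 \<and> helly_prop S h)"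
    using assms unfolding helly_number_def by auto
  then show ?thesis using LeastI_ex[of "\<lambda>h. h > 0 \<and> helly_prop S h"] by simp
qed

theorem lemma5:
  fixes S :: "(real^2) set" and h :: nat
  assumes "discrete_set S"
    and "helly_number S = enat h" and "h \<ge> 4"
  shows "(\<forall>m::nat. m \<ge> 3 \<longrightarrow> tverberg_number S m \<le> enat (h * (m - 1) + 1))
         \<and> tverberg_number S 2 \<le> enat (h + 2)"
proof -
  have helly: "helly_prop S h" using assms(2) by (rule helly_prop_helly_number)
  have "tverberg_number S m \<le> enat (h * (m - 1) + 1)" if "m \<ge> 3" for m
  proof -
    have "4 * (m - 1) \<le> h * (m - 1)" using assms(3) by simp
    then have "3 * m \<le> h * (m - 1) + 1" using that by linarith
    then show ?thesis
      using tverberg_prop_if_helly_prop[OF helly] that by (intro tverberg_number_le) auto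
  qed
  moreover have "tverberg_number S 2 \<le> enat (h + 2)"
    using tverberg_prop_if_helly_prop[OF helly, of 2 "h + 2"] assms(3)
    by (intro tverberg_number_le) auto
  ultimately show ?thesis by blast
qed

end
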